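(* Let $A$ be a $d\times n$ integer matrix of rank $d$ and let $\tilde A$ be the $(d+1)\times(n+1)$ integer matrix whose first row is $(1,\ldots,1)$ and whose remaining rows are $(a_{i1},\ldots,a_{in},0)$, $i=1,\ldots,d$. Let $\tilde w=(1,\ldots,1,0)\in\mathbf{R}^{n+1}$. Then for any $\varepsilon>0$ there exists $\tilde v\in\mathbf{R}^{n+1}$ with $\tilde v_{n+1}=0$ such that $\tilde w+\varepsilon\tilde v$ lies in the interior of a maximal dimensional Gröbner cone of the toric ideal $I_{\tilde A}$.
   Context: For an integer matrix $M$ with columns $m_1,\ldots,m_N$, the toric ideal $I_M\subset\mathbf{C}[\partial_1,\ldots,\partial_N]$ is the ideal generated by $\partial^u-\partial^v$ for $u,v\in\mathbf{Z}_{\ge0}^N$ with $Mu=Mv$. The Gröbner cones of $I_M$ are the cones of the Gröbner fan of $I_M$ (the sets of weight vectors inducing the same initial ideal). *)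

theory Defs
  imports "HOL-Analysis.Analysis" "HOL-Library.Poly_Mapping"
begin

type_synonym 'v mpoly = "('v \<Rightarrow>\<^sub>0 nat) \<Rightarrow>\<^sub>0 complex"

definition monom :: "('v \<Rightarrow>\<^sub>0 nat) \<Rightarrow> 'v mpoly" where
  "monom u = Poly_Mapping.single u 1"

definition is_ideal :: "'a::comm_ring_1 set \<Rightarrow> bool" where
  "is_ideal J \<longleftrightarrow> 0 \<in> J \<and> (\<forall>a\<in>J. \<forall>b\<in>J. a + b \<in> J) \<and> (\<forall>r. \<forall>a\<in>J. r * a \<in> J)"

definition ideal_gen :: "'a::comm_ring_1 set \<Rightarrow> 'a set" where
  "ideal_gen S = \<Inter>{J. is_ideal J \<and> S \<subseteq> J}"

definition mat_mult_exp :: "int^'v^'r \<Rightarrow> ('v::finite \<Rightarrow>\<^sub>0 nat) \<Rightarrow> int^'r" where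
  "mat_mult_exp M u = (\<chi> r. \<Sum>j\<in>UNIV. M $ r $ j * int (Poly_Mapping.lookup u j))"

definition toric_ideal :: "int^'v^'r \<Rightarrow> ('v::finite) mpoly set" where
  "toric_ideal M = ideal_gen {monom u - monom v | u v. mat_mult_exp M u = mat_mult_exp M v}"

definition wdeg :: "real^'v \<Rightarrow> ('v::finite \<Rightarrow>\<^sub>0 nat) \<Rightarrow> real" where
  "wdeg w u = (\<Sum>j\<in>UNIV. w $ j * real (Poly_Mapping.lookup u j))"

definition init_form :: "real^'v \<Rightarrow> ('v::finite) mpoly \<Rightarrow> 'v mpoly" where
  "init_form w f =
     (let m = Max (wdeg w ` Poly_Mapping.keys f) in
      (\<Sum>u\<in>{u \<in> Poly_Mapping.keys f. wdeg w u = m}. Poly_Mapping.single u (Poly_Mapping.lookup f u)))"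

definition init_ideal :: "real^'v \<Rightarrow> ('v::finite) mpoly set \<Rightarrow> 'v mpoly set" where
  "init_ideal w I = ideal_gen (init_form w ` I)"

definition groebner_cone :: "('v::finite) mpoly set \<Rightarrow> real^'v \<Rightarrow> (real^'v) set" where
  "groebner_cone I w = {w'. init_ideal w' I = init_ideal w I}"

definition groebner_cones :: "('v::finite) mpoly set \<Rightarrow> (real^'v) set set" where
  "groebner_cones I = range (groebner_cone I)"

definition maximal_dim :: "(real^'v::finite) set \<Rightarrow> bool" where
  "maximal_dim C \<longleftrightarrow> aff_dim C = int CARD('v)"

text \<open>The homogenized matrix tilde A: columns 'n option (None = new last column),
  rows 'd option (None = new first row of ones).\<close>
definition homog_mat :: "int^'n::finite^'d::finite \<Rightarrow> int^('n option)^('d option)" where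
  "homog_mat A = (\<chi> r j. case r of None \<Rightarrow> 1
                    | Some i \<Rightarrow> (case j of None \<Rightarrow> 0 | Some j' \<Rightarrow> A $ i $ j'))"

definition homog_weight :: "real^('n::finite option)" where
  "homog_weight = (\<chi> j. case j of None \<Rightarrow> 0 | Some _ \<Rightarrow> 1)"

end

theory Submission
  imports Defs
begin

text \<open>
  Grade exponent vectors by \<open>\<phi> u = \<tilde>A u\<close>. The toric ideal contains every binomial
  \<open>x\<^sup>u - x\<^sup>v\<close> with \<open>\<phi> u = \<phi> v\<close>, and each of its elements has vanishing coefficient sum
  on every fibre of \<open>\<phi>\<close>. Because of the row of ones the fibres are finite, so a weight \<open>p\<close>
  that separates the points of every fibre has a unique minimiser in each fibre, and the
  initial ideal of \<open>p\<close> is the monomial ideal spanned by all non-minimisers. By Dickson's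
  lemma this monoid ideal is generated by finitely many exponents, each beaten by a strict
  inequality that persists for weights near \<open>p\<close>; hence the initial ideal is constant near
  \<open>p\<close>, and \<open>p\<close> lies in the interior of a full-dimensional Groebner cone. Generic weights
  \<open>p\<close> with last coordinate \<open>0\<close> exist (they avoid countably many hyperplanes), and
  \<open>\<tilde>v = (p - \<tilde>w) / \<epsilon>\<close> does the job.
\<close>

lemma is_ideal_ideal_gen: "is_ideal (ideal_gen S)"
  unfolding is_ideal_def ideal_gen_def by auto

lemma ideal_gen_subset: "S \<subseteq> ideal_gen S"
  unfolding ideal_gen_def by auto

lemma ideal_gen_least: "is_ideal J \<Longrightarrow> S \<subseteq> J \<Longrightarrow> ideal_gen S \<subseteq> J"
  unfolding ideal_gen_def by auto

lemma is_ideal_sum: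
  assumes "is_ideal J" and "\<And>x. x \<in> X \<Longrightarrow> f x \<in> J"
  shows "sum f X \<in> J"
proof (cases "finite X")
  case True
  then show ?thesis using assms(2)
    by (induction X rule: finite_induct) (use assms(1) in \<open>auto simp: is_ideal_def\<close>)
qed (use assms(1) in \<open>simp add: is_ideal_def\<close>)

lemma poly_mapping_sum_single:
  "(\<Sum>u\<in>Poly_Mapping.keys f. Poly_Mapping.single u (Poly_Mapping.lookup f u)) = f"
  by (rule poly_mapping_eqI)
     (auto simp: lookup_sum lookup_single when_def in_keys_iff sum.delta)

definition monomial_ideal :: "('v \<Rightarrow>\<^sub>0 nat) set \<Rightarrow> 'v mpoly set" where
  "monomial_ideal M = {f. Poly_Mapping.keys f \<subseteq> M}"

definition exp_le :: "('v \<Rightarrow>\<^sub>0 nat) \<Rightarrow> ('v \<Rightarrow>\<^sub>0 nat) \<Rightarrow> bool" where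
  "exp_le u v \<longleftrightarrow> (\<forall>j. Poly_Mapping.lookup u j \<le> Poly_Mapping.lookup v j)"

lemma exp_le_add_diff: "exp_le u v \<Longrightarrow> v = u + (v - u)"
  by (rule poly_mapping_eqI) (simp add: lookup_add lookup_minus exp_le_def)

lemma exp_le_trans: "exp_le u v \<Longrightarrow> exp_le v w \<Longrightarrow> exp_le u w"
  unfolding exp_le_def using order_trans by blast

lemma is_ideal_monomial_ideal:
  fixes M :: "('v \<Rightarrow>\<^sub>0 nat) set"
  assumes "\<And>u d. u \<in> M \<Longrightarrow> u + d \<in> M"
  shows "is_ideal (monomial_ideal M)"
  unfolding is_ideal_def monomial_ideal_def
proof (intro conjI ballI allI; simp)
  fix a b :: "'v mpoly"
  assume "Poly_Mapping.keys a \<subseteq> M" "Poly_Mapping.keys b \<subseteq> M"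
  then show "Poly_Mapping.keys (a + b) \<subseteq> M" using keys_add[of a b] by blast
next
  fix r a :: "'v mpoly"
  assume "Poly_Mapping.keys a \<subseteq> M"
  then show "Poly_Mapping.keys (r * a) \<subseteq> M"
    using keys_mult[of r a] assms by (fastforce simp: add.commute)
qed

lemma monomial_ideal_subset:
  assumes "is_ideal J" and "\<And>u. u \<in> M \<Longrightarrow> monom u \<in> J"
  shows "monomial_ideal M \<subseteq> J"
proof
  fix f assume "f \<in> monomial_ideal M"
  then have keys: "Poly_Mapping.keys f \<subseteq> M" by (simp add: monomial_ideal_def)
  have "Poly_Mapping.single u (Poly_Mapping.lookup f u) \<in> J" if "u \<in> Poly_Mapping.keys f" for u
  proof -
    have "Poly_Mapping.single 0 (Poly_Mapping.lookup f u) * monom u \<in> J"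
      using assms that keys unfolding is_ideal_def by blast
    then show ?thesis by (simp add: monom_def mult_single)
  qed
  then have "(\<Sum>u\<in>Poly_Mapping.keys f. Poly_Mapping.single u (Poly_Mapping.lookup f u)) \<in> J"
    by (rule is_ideal_sum[OF assms(1)])
  then show "f \<in> J" by (simp only: poly_mapping_sum_single)
qed

section \<open>Polynomials balanced on the fibres of a grading\<close>

definition fiber_coeff_sum :: "('a \<Rightarrow> 'c) \<Rightarrow> 'c \<Rightarrow> ('a \<Rightarrow>\<^sub>0 'b::comm_monoid_add) \<Rightarrow> 'b" where
  "fiber_coeff_sum \<phi> c f =
     (\<Sum>u\<in>Poly_Mapping.keys f. if \<phi> u = c then Poly_Mapping.lookup f u else 0)"

definition fiber_balanced :: "('a \<Rightarrow> 'c) \<Rightarrow> ('a \<Rightarrow>\<^sub>0 'b::comm_monoid_add) set" where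
  "fiber_balanced \<phi> = {f. \<forall>c. fiber_coeff_sum \<phi> c f = 0}"

lemma fiber_coeff_sum_add:
  "fiber_coeff_sum \<phi> c (f + g) = fiber_coeff_sum \<phi> c f + fiber_coeff_sum \<phi> c g"
  unfolding fiber_coeff_sum_def by (rule setsum_keys_plus_distrib) auto

lemma fiber_coeff_sum_zero [simp]: "fiber_coeff_sum \<phi> c 0 = 0"
  by (simp add: fiber_coeff_sum_def)

lemma fiber_coeff_sum_single:
  "fiber_coeff_sum \<phi> c (Poly_Mapping.single b y) = (if \<phi> b = c then y else 0)"
  unfolding fiber_coeff_sum_def by auto

lemma fiber_coeff_sum_sum:
  "fiber_coeff_sum \<phi> c (sum f X) = (\<Sum>x\<in>X. fiber_coeff_sum \<phi> c (f x))"
  by (induction X rule: infinite_finite_induct) (simp_all add: fiber_coeff_sum_add)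

lemma fiber_coeff_sum_diff:
  fixes f g :: "'a \<Rightarrow>\<^sub>0 'b::ab_group_add"
  shows "fiber_coeff_sum \<phi> c (f - g) = fiber_coeff_sum \<phi> c f - fiber_coeff_sum \<phi> c g"
  using fiber_coeff_sum_add[of \<phi> c "f - g" g] by (simp add: eq_diff_eq)

lemma fiber_coeff_sum_mult:
  fixes r f :: "'a::comm_monoid_add \<Rightarrow>\<^sub>0 'b::comm_ring_1" and \<phi> :: "'a \<Rightarrow> 'c::ab_group_add"
  assumes add: "\<And>a b. \<phi> (a + b) = \<phi> a + \<phi> b"
  shows "fiber_coeff_sum \<phi> c (r * f) =
    (\<Sum>a\<in>Poly_Mapping.keys r. Poly_Mapping.lookup r a * fiber_coeff_sum \<phi> (c - \<phi> a) f)"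
proof -
  have "r * f = (\<Sum>a\<in>Poly_Mapping.keys r. \<Sum>q\<in>Poly_Mapping.keys f.
         Poly_Mapping.single (a + q) (Poly_Mapping.lookup r a * Poly_Mapping.lookup f q))"
    by (subst (1 2) poly_mapping_sum_single[symmetric]) (simp add: sum_product mult_single)
  then have "fiber_coeff_sum \<phi> c (r * f) = (\<Sum>a\<in>Poly_Mapping.keys r. \<Sum>q\<in>Poly_Mapping.keys f.
        if \<phi> (a + q) = c then Poly_Mapping.lookup r a * Poly_Mapping.lookup f q else 0)"
    by (simp add: fiber_coeff_sum_sum fiber_coeff_sum_single)
  also have "\<dots> = (\<Sum>a\<in>Poly_Mapping.keys r. Poly_Mapping.lookup r a * (\<Sum>q\<in>Poly_Mapping.keys f.
        if \<phi> q = c - \<phi> a then Poly_Mapping.lookup f q else 0))"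
    by (auto simp: sum_distrib_left add algebra_simps intro!: sum.cong)
  finally show ?thesis by (simp add: fiber_coeff_sum_def)
qed

lemma is_ideal_fiber_balanced:
  fixes \<phi> :: "'a::comm_monoid_add \<Rightarrow> 'c::ab_group_add"
  assumes "\<And>a b. \<phi> (a + b) = \<phi> a + \<phi> b"
  shows "is_ideal (fiber_balanced \<phi> :: ('a \<Rightarrow>\<^sub>0 'b::comm_ring_1) set)"
  unfolding is_ideal_def fiber_balanced_def
  by (auto simp: fiber_coeff_sum_add fiber_coeff_sum_mult[OF assms])

lemma fiber_balanced_partner:
  assumes "f \<in> fiber_balanced \<phi>" and u: "u \<in> Poly_Mapping.keys f"
  shows "\<exists>x\<in>Poly_Mapping.keys f. x \<noteq> u \<and> \<phi> x = \<phi> u"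
proof (rule ccontr)
  assume "\<not> ?thesis"
  then have "fiber_coeff_sum \<phi> (\<phi> u) f =
      (\<Sum>x\<in>Poly_Mapping.keys f. if x = u then Poly_Mapping.lookup f x else 0)"
    unfolding fiber_coeff_sum_def by (intro sum.cong) auto
  also have "\<dots> = Poly_Mapping.lookup f u" using u by simp
  finally show False using assms by (simp add: fiber_balanced_def in_keys_iff)
qed

section \<open>Dickson's lemma\<close>

lemma nat_seq_incseq_subseq:
  fixes s :: "nat \<Rightarrow> nat"
  obtains f :: "nat \<Rightarrow> nat" where "strict_mono f" "incseq (s \<circ> f)"
proof -
  obtain f where f: "strict_mono f" "monoseq (s \<circ> f)"
    using seq_monosub[of s] by (auto simp: o_def)
  show thesis
  proof (cases "incseq (s \<circ> f)")
    case False
    then have dec: "decseq (s \<circ> f)" using f(2) by (simp add: monoseq_iff)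
    obtain k where k: "\<And>j. s (f k) \<le> s (f j)"
      using ex_has_least_nat[of "\<lambda>_. True" _ "\<lambda>k. s (f k)"] by blast
    have "s (f (j + k)) = s (f k)" for j
      using k[of "j + k"] decseqD[OF dec, of k "j + k"] by simp
    moreover have "strict_mono (\<lambda>j. f (j + k))"
      using f(1) by (simp add: strict_mono_def)
    ultimately show thesis by (intro that[of "\<lambda>j. f (j + k)"]) (auto simp: incseq_def)
  qed (use f that in blast)
qed

lemma exp_seq_coordinatewise_incseq_subseq:
  fixes s :: "nat \<Rightarrow> ('v \<Rightarrow>\<^sub>0 nat)"
  assumes "finite D"
  shows "\<exists>f. strict_mono f \<and> (\<forall>j\<in>D. incseq (\<lambda>n. Poly_Mapping.lookup (s (f n)) j))"
  using assms
proof (induction D rule: finite_induct)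
  case empty
  then show ?case by (intro exI[of _ id]) (simp add: strict_mono_def)
next
  case (insert x F)
  then obtain f where f: "strict_mono f" "\<forall>j\<in>F. incseq (\<lambda>n. Poly_Mapping.lookup (s (f n)) j)"
    by blast
  obtain g where g: "strict_mono g" "incseq ((\<lambda>n. Poly_Mapping.lookup (s (f n)) x) \<circ> g)"
    by (rule nat_seq_incseq_subseq)
  have "\<forall>j\<in>F. incseq (\<lambda>n. Poly_Mapping.lookup (s (f (g n))) j)"
    using f(2) g(1) by (simp add: incseq_def strict_mono_less_eq)
  then show ?case
    using f(1) g by (intro exI[of _ "f \<circ> g"]) (auto simp: strict_mono_def o_def)
qed

lemma dickson:
  fixes s :: "nat \<Rightarrow> ('v::finite \<Rightarrow>\<^sub>0 nat)"
  shows "\<exists>i j. i < j \<and> exp_le (s i) (s j)"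
proof -
  obtain f :: "nat \<Rightarrow> nat" where f: "strict_mono f"
    "\<forall>j\<in>UNIV. incseq (\<lambda>n. Poly_Mapping.lookup (s (f n)) j)"
    using exp_seq_coordinatewise_incseq_subseq[of UNIV s] by auto
  then have "f 0 < f 1" "exp_le (s (f 0)) (s (f 1))"
    by (auto simp: strict_mono_def exp_le_def incseq_def)
  then show ?thesis by blast
qed

definition total_degree :: "('v::finite \<Rightarrow>\<^sub>0 nat) \<Rightarrow> nat" where
  "total_degree u = (\<Sum>j\<in>UNIV. Poly_Mapping.lookup u j)"

lemma total_degree_strict_mono:
  assumes le: "exp_le u v" and "u \<noteq> v"
  shows "total_degree u < total_degree v"
proof -
  obtain j where j: "Poly_Mapping.lookup u j \<noteq> Poly_Mapping.lookup v j"
    using \<open>u \<noteq> v\<close> poly_mapping_eqI by metis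
  have "\<forall>x\<in>UNIV. Poly_Mapping.lookup u x \<le> Poly_Mapping.lookup v x"
    using le by (simp add: exp_le_def)
  moreover have "Poly_Mapping.lookup u j < Poly_Mapping.lookup v j"
    using le j by (simp add: exp_le_def order_less_le)
  ultimately show ?thesis
    unfolding total_degree_def by (intro sum_strict_mono_ex1) auto
qed

lemma finite_minimal_basis:
  fixes M :: "('v::finite \<Rightarrow>\<^sub>0 nat) set"
  shows "\<exists>G. finite G \<and> G \<subseteq> M \<and> (\<forall>u\<in>M. \<exists>g\<in>G. exp_le g u)"
proof -
  define G where "G = {u\<in>M. \<forall>v\<in>M. exp_le v u \<longrightarrow> v = u}"
  have "finite G"
  proof (rule ccontr)
    assume "infinite G"
    then obtain s :: "nat \<Rightarrow> _" where s: "inj s" "range s \<subseteq> G"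
      using infinite_countable_subset by blast
    obtain i j where ij: "i < j" "exp_le (s i) (s j)" using dickson[of s] by blast
    then have "s i = s j" using s(2) unfolding G_def by blast
    then show False using s(1) ij(1) by (auto dest: injD)
  qed
  moreover have "\<exists>g\<in>G. exp_le g u" if "u \<in> M" for u
    using that
  proof (induction "total_degree u" arbitrary: u rule: less_induct)
    case less
    show ?case
    proof (cases "u \<in> G")
      case True
      then show ?thesis by (auto simp: exp_le_def)
    next
      case False
      then obtain v where v: "v \<in> M" "exp_le v u" "v \<noteq> u"
        using less.prems unfolding G_def by blast
      then obtain g where "g \<in> G" "exp_le g v"
        using less.hyps[of v] total_degree_strict_mono by blast
      then show ?thesis using v(2) exp_le_trans by blast
    qed
  qed
  ultimately show ?thesis unfolding G_def by blast
qed

section \<open>Weights and nonstandard monomials\<close>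

lemma wdeg_add: "wdeg w (a + b) = wdeg w a + wdeg w b"
  unfolding wdeg_def by (simp add: lookup_add distrib_left sum.distrib)

lemma continuous_on_wdeg: "continuous_on S (\<lambda>w. wdeg w a)"
  unfolding wdeg_def by (intro continuous_intros)

lemma init_form_binomial:
  assumes "wdeg w v < wdeg w u"
  shows "init_form w (monom u - monom v) = monom u"
proof -
  have "u \<noteq> v" using assms by auto
  then have keys: "Poly_Mapping.keys (monom u - monom v) = {u, v}"
    and coeff: "Poly_Mapping.lookup (monom u - monom v) u = 1"
    by (auto simp: in_keys_iff monom_def lookup_minus lookup_single when_def split: if_splits)
  have "Max (wdeg w ` Poly_Mapping.keys (monom u - monom v)) = wdeg w u"
    unfolding keys using assms by simp
  moreover have "{x \<in> {u, v}. wdeg w x = wdeg w u} = {u}"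
    using assms by auto
  ultimately show ?thesis
    unfolding init_form_def Let_def keys using coeff by (simp add: monom_def)
qed

lemma keys_init_form:
  "Poly_Mapping.keys (init_form w f) \<subseteq>
     {u \<in> Poly_Mapping.keys f. wdeg w u = Max (wdeg w ` Poly_Mapping.keys f)}"
  unfolding init_form_def Let_def by (rule order_trans[OF keys_sum]) auto

text \<open>When every fibre has a unique \<open>w\<close>-minimiser, these are the exponents of the
  monomials in the initial ideal of \<open>w\<close> (the minimisers are the standard monomials).\<close>

definition nonstandard ::
    "(('v::finite \<Rightarrow>\<^sub>0 nat) \<Rightarrow> 'c) \<Rightarrow> real^'v \<Rightarrow> ('v \<Rightarrow>\<^sub>0 nat) set" where
  "nonstandard \<phi> w = {u. \<exists>v. \<phi> v = \<phi> u \<and> wdeg w v < wdeg w u}"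

definition unique_fiber_minima :: "(('v::finite \<Rightarrow>\<^sub>0 nat) \<Rightarrow> 'c) \<Rightarrow> real^'v \<Rightarrow> bool" where
  "unique_fiber_minima \<phi> w \<longleftrightarrow>
     (\<forall>u v. \<phi> u = \<phi> v \<longrightarrow> u \<notin> nonstandard \<phi> w \<longrightarrow> v \<notin> nonstandard \<phi> w \<longrightarrow> u = v)"

lemma unique_fiber_minima_if_separating:
  assumes "\<And>u v. \<phi> u = \<phi> v \<Longrightarrow> u \<noteq> v \<Longrightarrow> wdeg w u \<noteq> wdeg w v"
  shows "unique_fiber_minima \<phi> w"
  unfolding unique_fiber_minima_def
proof (intro allI impI)
  fix u v assume "\<phi> u = \<phi> v" "u \<notin> nonstandard \<phi> w" "v \<notin> nonstandard \<phi> w"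
  then have "\<not> wdeg w u < wdeg w v" "\<not> wdeg w v < wdeg w u"
    by (auto simp: nonstandard_def)
  then show "u = v" using assms[OF \<open>\<phi> u = \<phi> v\<close>] by fastforce
qed

lemma unique_fiber_minimum_strict:
  assumes "unique_fiber_minima \<phi> w" "u \<notin> nonstandard \<phi> w" "\<phi> x = \<phi> u" "x \<noteq> u"
  shows "wdeg w u < wdeg w x"
proof -
  have "x \<in> nonstandard \<phi> w"
    using assms unfolding unique_fiber_minima_def by blast
  then obtain y where "\<phi> y = \<phi> u" "wdeg w y < wdeg w x"
    using assms(3) by (auto simp: nonstandard_def)
  moreover have "\<not> wdeg w y < wdeg w u"
    using assms(2) \<open>\<phi> y = \<phi> u\<close> by (auto simp: nonstandard_def)
  ultimately show ?thesis by simp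
qed

lemma fiber_has_minimum:
  assumes "finite {v. \<phi> v = \<phi> u}"
  obtains m where "\<phi> m = \<phi> u" "m \<notin> nonstandard \<phi> w"
proof -
  let ?D = "wdeg w ` {v. \<phi> v = \<phi> u}"
  have "Min ?D \<in> ?D" using assms by (intro Min_in) auto
  then obtain m where m: "\<phi> m = \<phi> u" "wdeg w m = Min ?D" by auto
  have "wdeg w m \<le> wdeg w v" if "\<phi> v = \<phi> u" for v
    unfolding m(2) using assms that by (intro Min_le) auto
  then have "m \<notin> nonstandard \<phi> w"
    using m(1) by (auto simp: nonstandard_def not_less)
  then show thesis using that m(1) by blast
qed

locale exponent_grading =
  fixes \<phi> :: "('v::finite \<Rightarrow>\<^sub>0 nat) \<Rightarrow> 'c::ab_group_add"
  assumes grading_add: "\<phi> (a + b) = \<phi> a + \<phi> b"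
begin

lemma nonstandard_add:
  assumes "u \<in> nonstandard \<phi> w"
  shows "u + d \<in> nonstandard \<phi> w"
proof -
  obtain v where "\<phi> v = \<phi> u" "wdeg w v < wdeg w u"
    using assms by (auto simp: nonstandard_def)
  then have "\<phi> (v + d) = \<phi> (u + d)" "wdeg w (v + d) < wdeg w (u + d)"
    by (simp_all add: grading_add wdeg_add)
  then show ?thesis by (auto simp: nonstandard_def)
qed

lemma nonstandard_exp_le_closed:
  assumes "u \<in> nonstandard \<phi> w" and "exp_le u u'"
  shows "u' \<in> nonstandard \<phi> w"
proof -
  have "u + (u' - u) \<in> nonstandard \<phi> w" using assms(1) by (rule nonstandard_add)
  then show ?thesis by (simp only: exp_le_add_diff[OF assms(2), symmetric])
qed

text \<open>Dickson's lemma reduces membership in the nonstandard set to finitely many strict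
  inequalities between weights, and these are open conditions on \<open>w\<close>.\<close>

lemma nonstandard_locally_constant:
  assumes fin: "\<And>c. finite {v. \<phi> v = c}" and p: "unique_fiber_minima \<phi> p"
  shows "\<exists>U. open U \<and> p \<in> U \<and> (\<forall>w\<in>U. nonstandard \<phi> w = nonstandard \<phi> p)"
proof -
  let ?N = "nonstandard \<phi> p"
  obtain G where G: "finite G" "G \<subseteq> ?N" "\<forall>u\<in>?N. \<exists>g\<in>G. exp_le g u"
    using finite_minimal_basis[of ?N] by blast
  have "\<forall>g\<in>G. \<exists>v. \<phi> v = \<phi> g \<and> wdeg p v < wdeg p g"
    using G(2) by (auto simp: nonstandard_def)
  then obtain v where v: "\<And>g. g \<in> G \<Longrightarrow> \<phi> (v g) = \<phi> g \<and> wdeg p (v g) < wdeg p g"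
    by (auto dest!: bchoice)
  define U where "U = (\<Inter>g\<in>G. {w. wdeg w (v g) < wdeg w g})"
  have "open U"
    unfolding U_def using G(1)
    by (intro open_INT ballI open_Collect_less continuous_on_wdeg) auto
  moreover have "p \<in> U" using v by (simp add: U_def)
  moreover have "nonstandard \<phi> w = ?N" if w: "w \<in> U" for w
  proof
    show sub: "?N \<subseteq> nonstandard \<phi> w"
    proof
      fix u assume "u \<in> ?N"
      then obtain g where g: "g \<in> G" "exp_le g u" using G(3) by blast
      then have "g \<in> nonstandard \<phi> w"
        using v[of g] w unfolding U_def nonstandard_def by blast
      then show "u \<in> nonstandard \<phi> w" using g(2) nonstandard_exp_le_closed by blast
    qed
    show "nonstandard \<phi> w \<subseteq> ?N"
    proof (rule subsetI, rule ccontr)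
      fix u assume u: "u \<in> nonstandard \<phi> w" "u \<notin> ?N"
      obtain m where m: "\<phi> m = \<phi> u" "m \<notin> nonstandard \<phi> w"
        using fiber_has_minimum fin by blast
      then have "m = u" using sub u(2) p unfolding unique_fiber_minima_def by blast
      then show False using m(2) u(1) by simp
    qed
  qed
  ultimately show ?thesis by blast
qed

end

locale binomial_fiber_ideal = exponent_grading \<phi>
  for \<phi> :: "('v::finite \<Rightarrow>\<^sub>0 nat) \<Rightarrow> 'c::ab_group_add" +
  fixes I :: "'v mpoly set"
  assumes balanced: "I \<subseteq> fiber_balanced \<phi>"
    and binomial_mem: "\<phi> u = \<phi> v \<Longrightarrow> monom u - monom v \<in> I"
begin

lemma monom_mem_init_ideal:
  assumes "u \<in> nonstandard \<phi> w"
  shows "monom u \<in> init_ideal w I"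
proof -
  obtain v where v: "\<phi> v = \<phi> u" "wdeg w v < wdeg w u"
    using assms by (auto simp: nonstandard_def)
  have "monom u = init_form w (monom u - monom v)"
    using v(2) by (rule init_form_binomial[symmetric])
  moreover have "monom u - monom v \<in> I"
    using v(1) by (intro binomial_mem) simp
  ultimately have "monom u \<in> init_form w ` I" by (rule image_eqI)
  then show ?thesis unfolding init_ideal_def by (rule subsetD[OF ideal_gen_subset])
qed

lemma init_ideal_eq_monomial_ideal:
  assumes "unique_fiber_minima \<phi> w"
  shows "init_ideal w I = monomial_ideal (nonstandard \<phi> w)"
proof
  have "init_form w f \<in> monomial_ideal (nonstandard \<phi> w)" if f: "f \<in> I" for f
    unfolding monomial_ideal_def
  proof (rule CollectI, rule subsetI, rule ccontr)
    fix u assume "u \<in> Poly_Mapping.keys (init_form w f)" "u \<notin> nonstandard \<phi> w"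
    then have u: "u \<in> Poly_Mapping.keys f" "wdeg w u = Max (wdeg w ` Poly_Mapping.keys f)"
      and min: "u \<notin> nonstandard \<phi> w"
      using keys_init_form by blast+
    have "f \<in> fiber_balanced \<phi>" using f balanced by blast
    then obtain x where x: "x \<in> Poly_Mapping.keys f" "x \<noteq> u" "\<phi> x = \<phi> u"
      using fiber_balanced_partner u(1) by (metis (no_types))
    then have "wdeg w u < wdeg w x"
      using unique_fiber_minimum_strict[OF assms min] by blast
    moreover have "wdeg w x \<le> wdeg w u" using u(2) x(1) by simp
    ultimately show False by simp
  qed
  then show "init_ideal w I \<subseteq> monomial_ideal (nonstandard \<phi> w)"
    unfolding init_ideal_def
    by (intro ideal_gen_least is_ideal_monomial_ideal nonstandard_add) blast+
  show "monomial_ideal (nonstandard \<phi> w) \<subseteq> init_ideal w I"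
    unfolding init_ideal_def
    by (rule monomial_ideal_subset[OF is_ideal_ideal_gen])
       (rule monom_mem_init_ideal[unfolded init_ideal_def])
qed

lemma interior_groebner_cone:
  assumes "\<And>c. finite {v. \<phi> v = c}" and p: "unique_fiber_minima \<phi> p"
  shows "p \<in> interior (groebner_cone I p)"
proof -
  obtain U where U: "open U" "p \<in> U" "\<And>w. w \<in> U \<Longrightarrow> nonstandard \<phi> w = nonstandard \<phi> p"
    using nonstandard_locally_constant[OF assms] by blast
  have "init_ideal w I = init_ideal p I" if "w \<in> U" for w
  proof -
    have "unique_fiber_minima \<phi> w" using p U(3)[OF that] by (simp add: unique_fiber_minima_def)
    then show ?thesis using U(3)[OF that] p by (simp add: init_ideal_eq_monomial_ideal)
  qed
  then have "U \<subseteq> groebner_cone I p" by (auto simp: groebner_cone_def)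
  then show ?thesis using U(1,2) by (rule interiorI[rotated 2])
qed

end

lemma maximal_dim_if_interior_nonempty:
  fixes C :: "(real^'v::finite) set"
  assumes "interior C \<noteq> {}"
  shows "maximal_dim C"
proof -
  have "aff_dim C = int DIM(real^'v)" using assms by (rule aff_dim_nonempty_interior)
  then show ?thesis unfolding maximal_dim_def by (simp only: DIM_cart DIM_real mult_1_right)
qed

section \<open>The toric ideal of the homogenised matrix\<close>

lemma mat_mult_exp_add: "mat_mult_exp M (a + b) = mat_mult_exp M a + mat_mult_exp M b"
  unfolding mat_mult_exp_def by (simp add: vec_eq_iff lookup_add distrib_left sum.distrib)

lemma toric_ideal_binomial_fiber_ideal:
  fixes M :: "int^'v::finite^'r"
  shows "binomial_fiber_ideal (mat_mult_exp M) (toric_ideal M)"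
proof
  show "toric_ideal M \<subseteq> fiber_balanced (mat_mult_exp M)"
    unfolding toric_ideal_def
  proof (rule ideal_gen_least)
    show "is_ideal (fiber_balanced (mat_mult_exp M) :: 'v mpoly set)"
      by (rule is_ideal_fiber_balanced) (rule mat_mult_exp_add)
  qed (auto simp: fiber_balanced_def fiber_coeff_sum_diff monom_def fiber_coeff_sum_single)
qed (auto simp: mat_mult_exp_add toric_ideal_def intro: subsetD[OF ideal_gen_subset])

lemma sum_UNIV_option:
  "(\<Sum>j\<in>UNIV. f j) = f None + (\<Sum>i\<in>UNIV. f (Some i :: 'a::finite option))"
  by (simp add: UNIV_option_conv sum.reindex)

lemma homog_mat_row_of_ones: "mat_mult_exp (homog_mat A) u $ None = int (total_degree u)"
  unfolding mat_mult_exp_def homog_mat_def total_degree_def by simp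

lemma finite_fibers_homog_mat:
  fixes A :: "int^('n::finite)^('d::finite)"
  shows "finite {v. mat_mult_exp (homog_mat A) v = c}"
proof -
  define F where "F = {v. mat_mult_exp (homog_mat A) v = c}"
  define s where "s = nat (c $ None)"
  have "Poly_Mapping.lookup v j \<le> s" if "v \<in> F" for v j
  proof -
    have "Poly_Mapping.lookup v j \<le> total_degree v"
      unfolding total_degree_def by (rule member_le_sum) auto
    then show ?thesis using that homog_mat_row_of_ones[of A v] by (simp add: F_def s_def)
  qed
  then have "Poly_Mapping.lookup ` F \<subseteq> UNIV \<rightarrow>\<^sub>E {..s}"
    by (auto simp: PiE_UNIV_domain Pi_def)
  then have "finite (Poly_Mapping.lookup ` F)"
    by (rule finite_subset) (simp add: finite_PiE)
  moreover have "inj_on Poly_Mapping.lookup F"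
    by (rule inj_onI) (rule poly_mapping_eqI, simp)
  ultimately show ?thesis unfolding F_def[symmetric] by (rule finite_imageD)
qed

definition no_integer_relation :: "real^'n::finite \<Rightarrow> bool" where
  "no_integer_relation q \<longleftrightarrow>
     (\<forall>c::int^'n. c \<noteq> 0 \<longrightarrow> (\<Sum>j\<in>UNIV. q $ j * real_of_int (c $ j)) \<noteq> 0)"

lemma no_integer_relation_exists: "\<exists>q::real^'n::finite. no_integer_relation q"
proof -
  define H where "H c = {x::real^'n. (\<chi> j. real_of_int (c $ j)) \<bullet> x = 0}" for c :: "int^'n"
  have "negligible (H c)" if "c \<noteq> 0" for c
    unfolding H_def using that by (intro negligible_hyperplane) (auto simp: vec_eq_iff)
  then have "negligible (\<Union> (H ` (UNIV - {0})))"
    by (intro negligible_countable_Union) auto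
  then obtain q where "q \<notin> \<Union> (H ` (UNIV - {0}))"
    using non_negligible_UNIV by (metis UNIV_eq_I)
  then show ?thesis
    by (intro exI[of _ q]) (auto simp: no_integer_relation_def H_def inner_vec_def mult.commute)
qed

definition extend_weight :: "real^'n \<Rightarrow> real^('n option)" where
  "extend_weight q = (\<chi> j. case j of None \<Rightarrow> 0 | Some i \<Rightarrow> q $ i)"

lemma wdeg_extend_weight:
  "wdeg (extend_weight q) u = (\<Sum>i\<in>UNIV. q $ i * real (Poly_Mapping.lookup u (Some i)))"
  unfolding wdeg_def extend_weight_def by (subst sum_UNIV_option) simp

text \<open>Two exponents in a fibre have the same total degree, so they differ in some of the
  first \<open>n\<close> coordinates, and a generic \<open>q\<close> sees that difference.\<close>

lemma extend_weight_separates_fibers: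
  fixes A :: "int^('n::finite)^('d::finite)" and q :: "real^'n"
  assumes q: "no_integer_relation q"
    and eq: "mat_mult_exp (homog_mat A) u = mat_mult_exp (homog_mat A) v" and "u \<noteq> v"
  shows "wdeg (extend_weight q) u \<noteq> wdeg (extend_weight q) v"
proof
  assume same: "wdeg (extend_weight q) u = wdeg (extend_weight q) v"
  define c where "c = (\<chi> i. int (Poly_Mapping.lookup u (Some i)) - int (Poly_Mapping.lookup v (Some i)))"
  have "(\<Sum>i\<in>UNIV. q $ i * real_of_int (c $ i)) =
        wdeg (extend_weight q) u - wdeg (extend_weight q) v"
    unfolding c_def wdeg_extend_weight by (simp add: sum_subtractf[symmetric] algebra_simps)
  also have "\<dots> = 0" using same by simp
  finally have "c = 0" using q by (auto simp: no_integer_relation_def)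
  then have some: "Poly_Mapping.lookup u (Some i) = Poly_Mapping.lookup v (Some i)" for i
    unfolding c_def by (simp add: vec_eq_iff)
  have "total_degree u = total_degree v"
    using homog_mat_row_of_ones[of A u] homog_mat_row_of_ones[of A v] eq by simp
  then have "Poly_Mapping.lookup u None = Poly_Mapping.lookup v None"
    unfolding total_degree_def sum_UNIV_option using some by simp
  then have "u = v" using some by (intro poly_mapping_eqI) (metis option.exhaust)
  with \<open>u \<noteq> v\<close> show False by contradiction
qed

theorem mainTheorem2:
  fixes A :: "int^('n::finite)^('d::finite)" and \<epsilon> :: real
  assumes "rank (map_matrix real_of_int A) = CARD('d)"
    and "\<epsilon> > 0"
  shows "\<exists>v :: real^('n option). v $ None = 0 \<and>
           (\<exists>C \<in> groebner_cones (toric_ideal (homog_mat A)).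
              maximal_dim C \<and> homog_weight + \<epsilon> *\<^sub>R v \<in> interior C)"
proof -
  obtain q :: "real^'n" where q: "no_integer_relation q"
    using no_integer_relation_exists by blast
  define p where "p = extend_weight q"
  define C where "C = groebner_cone (toric_ideal (homog_mat A)) p"
  define v where "v = (1 / \<epsilon>) *\<^sub>R (p - homog_weight)"
  have "unique_fiber_minima (mat_mult_exp (homog_mat A)) p"
    unfolding p_def by (intro unique_fiber_minima_if_separating extend_weight_separates_fibers q)
  then have "p \<in> interior C"
    unfolding C_def using finite_fibers_homog_mat
    by (intro binomial_fiber_ideal.interior_groebner_cone[OF toric_ideal_binomial_fiber_ideal])
  moreover have "C \<in> groebner_cones (toric_ideal (homog_mat A))"
    by (simp add: C_def groebner_cones_def)
  moreover have "v $ None = 0"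
    by (simp add: v_def p_def extend_weight_def homog_weight_def)
  moreover have "homog_weight + \<epsilon> *\<^sub>R v = p"
    using \<open>\<epsilon> > 0\<close> by (simp add: v_def)
  ultimately show ?thesis using maximal_dim_if_interior_nonempty by blast
qed

end
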